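(* Let $(\Omega,\mathcal F)$ be a measurable space and $\mathcal P$ a σ-convex family of probability measures on $\mathcal F$. The following are equivalent: (1) $\mathcal P$ is dominated by a σ-finite measure; (2) there is a countable set $\mathcal Q$ of pairwise singular probability measures on $\mathcal F$ such that $\mathcal Q\lll\mathcal P\lll\mathrm{sconv}(\mathcal Q)$.
   Context: σ-convex: closed under countable convex combinations $\sum_k\lambda_kP_k$ ($\lambda_k\ge0$, $\sum\lambda_k=1$). $\mathrm{sconv}(\mathcal Q)$ is the set of all countable convex combinations of elements of $\mathcal Q$. For families $\mathcal A,\mathcal B$ of measures, $\mathcal A\lll\mathcal B$ means that for every $A\in\mathcal A$ there is $B\in\mathcal B$ with $A\ll B$. $\mathcal P$ is dominated by a measure $\mu$ if $P\ll\mu$ for all $P\in\mathcal P$. *)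

theory Defs
  imports "HOL-Probability.Probability"
begin

definition ccomb :: "'a measure \<Rightarrow> (nat \<Rightarrow> real) \<Rightarrow> (nat \<Rightarrow> 'a measure) \<Rightarrow> 'a measure" where
  "ccomb F l P = measure_of (space F) (sets F) (\<lambda>A. \<Sum>k. ennreal (l k) * emeasure (P k) A)"

definition sconv :: "'a measure \<Rightarrow> 'a measure set \<Rightarrow> 'a measure set" where
  "sconv F Q = {ccomb F l P | l P. (\<forall>k. 0 \<le> l k) \<and> l sums 1 \<and> (\<forall>k. P k \<in> Q)}"

definition sigma_convex :: "'a measure \<Rightarrow> 'a measure set \<Rightarrow> bool" where
  "sigma_convex F \<P> \<longleftrightarrow> sconv F \<P> \<subseteq> \<P>"

text \<open>A \<lll> B: every element of A is absolutely continuous w.r.t. some element of B.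
  Note: absolutely_continuous M N means N << M.\<close>
definition lll :: "'a measure set \<Rightarrow> 'a measure set \<Rightarrow> bool" where
  "lll \<A> \<B> \<longleftrightarrow> (\<forall>A\<in>\<A>. \<exists>B\<in>\<B>. absolutely_continuous B A)"

definition mutually_singular :: "'a measure \<Rightarrow> 'a measure \<Rightarrow> bool" where
  "mutually_singular P Q \<longleftrightarrow> (\<exists>A\<in>sets P. emeasure P A = 0 \<and> emeasure Q (space Q - A) = 0)"

definition dominated_by :: "'a measure set \<Rightarrow> 'a measure \<Rightarrow> bool" where
  "dominated_by \<P> \<mu> \<longleftrightarrow> (\<forall>P\<in>\<P>. absolutely_continuous \<mu> P)"

end

theory Submission
  imports Defs
begin

text \<open>If \<open>\<P>\<close> is dominated by a \<sigma>-finite measure, it is also dominated by a finite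
  measure \<open>\<nu>\<close>, a density of the \<sigma>-finite one. \<sigma>-convexity lets every countable subfamily
  of \<open>\<P>\<close> be dominated by a single member (a positive countable combination), so the
  Halmos--Savage exhaustion argument yields a member \<open>P\<^sub>0\<close> dominating all of \<open>\<P>\<close>; then
  \<open>\<Q> = {P\<^sub>0}\<close> works. Conversely, a combination of an enumeration of \<open>\<Q>\<close> with strictly
  positive weights is a probability measure whose null sets are null for every element of
  \<open>sconv \<Q>\<close>, hence for every element of \<open>\<P>\<close>.\<close>

lemma suminf_swap_ennreal:
  fixes f :: "nat \<Rightarrow> nat \<Rightarrow> ennreal"
  shows "(\<Sum>i. \<Sum>k. f k i) = (\<Sum>k. \<Sum>i. f k i)"
proof -
  have "(\<Sum>i. \<Sum>k. f k i) = (\<integral>\<^sup>+i. (\<Sum>k. f k i) \<partial>count_space UNIV)"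
    by (simp add: nn_integral_count_space_nat)
  also have "\<dots> = (\<Sum>k. \<integral>\<^sup>+i. f k i \<partial>count_space UNIV)"
    by (rule nn_integral_suminf) simp
  also have "\<dots> = (\<Sum>k. \<Sum>i. f k i)"
    by (simp add: nn_integral_count_space_nat)
  finally show ?thesis .
qed

lemma ex_positive_weights_sums_1: "\<exists>l :: nat \<Rightarrow> real. (\<forall>k. 0 < l k) \<and> l sums 1"
  using power_half_series by (intro exI[of _ "\<lambda>k. (1/2) ^ Suc k"]) simp

lemma sets_ccomb[simp]: "sets (ccomb F l P) = sets F"
  unfolding ccomb_def by (simp add: sets_measure_of sets.space_closed)

lemma space_ccomb[simp]: "space (ccomb F l P) = space F"
  unfolding ccomb_def by (simp add: space_measure_of_conv)

lemma emeasure_ccomb: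
  assumes P: "\<And>k. sets (P k) = sets F" and A: "A \<in> sets F"
  shows "emeasure (ccomb F l P) A = (\<Sum>k. ennreal (l k) * emeasure (P k) A)"
  unfolding ccomb_def
proof (rule emeasure_measure_of_sigma[OF sets.sigma_algebra_axioms _ _ A])
  show "positive (sets F) (\<lambda>A. \<Sum>k. ennreal (l k) * emeasure (P k) A)"
    by (simp add: positive_def)
  show "countably_additive (sets F) (\<lambda>A. \<Sum>k. ennreal (l k) * emeasure (P k) A)"
    unfolding countably_additive_def
  proof (intro allI impI)
    fix B :: "nat \<Rightarrow> 'a set" assume B: "range B \<subseteq> sets F" "disjoint_family B"
    have "(\<Sum>i. \<Sum>k. ennreal (l k) * emeasure (P k) (B i))
        = (\<Sum>k. ennreal (l k) * (\<Sum>i. emeasure (P k) (B i)))"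
      by (simp add: suminf_swap_ennreal)
    also have "\<dots> = (\<Sum>k. ennreal (l k) * emeasure (P k) (\<Union>i. B i))"
      using B P by (simp add: suminf_emeasure)
    finally show "(\<Sum>i. \<Sum>k. ennreal (l k) * emeasure (P k) (B i))
        = (\<Sum>k. ennreal (l k) * emeasure (P k) (\<Union>i. B i))" .
  qed
qed

lemma null_sets_ccombI:
  assumes "\<And>k. sets (P k) = sets F" "A \<in> sets F" "\<And>k. A \<in> null_sets (P k)"
  shows "A \<in> null_sets (ccomb F l P)"
  using assms by (simp add: emeasure_ccomb null_sets_def)

lemma null_sets_ccombD:
  assumes P: "\<And>k. sets (P k) = sets F" and l: "\<And>k. 0 < l k"
    and A: "A \<in> null_sets (ccomb F l P)"
  shows "A \<in> null_sets (P k)"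
proof -
  have A_sets: "A \<in> sets F"
    using A by auto
  moreover have "emeasure (ccomb F l P) A = 0"
    using A by auto
  ultimately have "(\<Sum>k. ennreal (l k) * emeasure (P k) A) = 0"
    using P by (simp add: emeasure_ccomb)
  then have "ennreal (l k) * emeasure (P k) A = 0"
    by (simp add: suminf_eq_zero_iff)
  then show ?thesis
    using l[of k] A_sets P by (auto simp: ennreal_eq_0_iff)
qed

lemma prob_space_ccomb:
  assumes "\<And>k. prob_space (P k)" "\<And>k. sets (P k) = sets F" "\<And>k. 0 \<le> l k" "l sums 1"
  shows "prob_space (ccomb F l P)"
proof
  have "emeasure (P k) (space F) = 1" for k
    using assms(1,2) prob_space.emeasure_space_1 sets_eq_imp_space_eq by metis
  then have "emeasure (ccomb F l P) (space F) = (\<Sum>k. ennreal (l k))"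
    using assms(2) by (simp add: emeasure_ccomb)
  also have "\<dots> = 1"
    using assms(3,4) by (simp add: suminf_ennreal2 sums_summable sums_unique[symmetric])
  finally show "emeasure (ccomb F l P) (space (ccomb F l P)) = 1" by simp
qed

lemma ccomb_const:
  assumes "sets P = sets F" "\<And>k. 0 \<le> l k" "l sums 1"
  shows "ccomb F l (\<lambda>_. P) = P"
proof (rule measure_eqI)
  fix A assume "A \<in> sets (ccomb F l (\<lambda>_. P))"
  then show "emeasure (ccomb F l (\<lambda>_. P)) A = emeasure P A"
    using assms by (simp add: emeasure_ccomb suminf_ennreal2 sums_summable sums_unique[symmetric])
qed (simp add: assms(1))

lemma subset_sconv:
  assumes "\<And>Q. Q \<in> \<Q> \<Longrightarrow> sets Q = sets F"
  shows "\<Q> \<subseteq> sconv F \<Q>"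
proof
  fix Q assume Q: "Q \<in> \<Q>"
  obtain l :: "nat \<Rightarrow> real" where l: "\<And>k. 0 < l k" "l sums 1"
    using ex_positive_weights_sums_1 by blast
  then have "ccomb F l (\<lambda>_. Q) = Q"
    using assms[OF Q] by (intro ccomb_const) (auto intro: less_imp_le)
  then show "Q \<in> sconv F \<Q>"
    unfolding sconv_def using l Q by (auto intro!: exI[of _ l] exI[of _ "\<lambda>_. Q"] less_imp_le)
qed

lemma sconv_dominated_by_prob_space:
  assumes \<Q>: "countable \<Q>" "\<Q> \<noteq> {}" "\<And>Q. Q \<in> \<Q> \<Longrightarrow> prob_space Q \<and> sets Q = sets F"
  shows "\<exists>\<mu>. sets \<mu> = sets F \<and> prob_space \<mu> \<and> dominated_by (sconv F \<Q>) \<mu>"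
proof -
  define q where "q = from_nat_into \<Q>"
  have q: "q n \<in> \<Q>" for n
    unfolding q_def using \<Q>(2) by (rule from_nat_into)
  obtain l :: "nat \<Rightarrow> real" where l: "\<And>k. 0 < l k" "l sums 1"
    using ex_positive_weights_sums_1 by blast
  have "prob_space (ccomb F l q)"
    using q \<Q>(3) l by (intro prob_space_ccomb) (auto intro: less_imp_le)
  moreover have "absolutely_continuous (ccomb F l q) B" if "B \<in> sconv F \<Q>" for B
  proof -
    obtain m R where B: "B = ccomb F m R" and R: "\<And>k. R k \<in> \<Q>"
      using \<open>B \<in> sconv F \<Q>\<close> unfolding sconv_def by blast
    have "A \<in> null_sets B" if A: "A \<in> null_sets (ccomb F l q)" for A
    proof -
      have "A \<in> null_sets (q n)" for n
        using A q \<Q>(3) l by (intro null_sets_ccombD) auto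
      moreover have "\<exists>n. q n = R k" for k
        unfolding q_def using from_nat_into_surj[OF \<Q>(1) R] by blast
      ultimately have "A \<in> null_sets (R k)" for k
        by metis
      then show ?thesis
        unfolding B using A R \<Q>(3) by (intro null_sets_ccombI) auto
    qed
    then show ?thesis
      unfolding absolutely_continuous_def by blast
  qed
  ultimately show ?thesis
    unfolding dominated_by_def by (intro exI[of _ "ccomb F l q"]) auto
qed

lemma (in finite_measure) ex_ess_greatest_set:
  assumes \<N>: "\<N> \<subseteq> sets M" "\<N> \<noteq> {}"
    and Union_closed: "\<And>N. (\<And>i::nat. N i \<in> \<N>) \<Longrightarrow> (\<Union>i. N i) \<in> \<N>"
  shows "\<exists>U\<in>\<N>. \<forall>N\<in>\<N>. N - U \<in> null_sets M"
proof -
  define s where "s = (SUP N\<in>\<N>. measure M N)"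
  have bdd: "bdd_above (measure M ` \<N>)"
    by (rule bdd_aboveI[of _ "measure M (space M)"]) (use \<N> in \<open>auto intro!: bounded_measure\<close>)
  have le_s: "measure M N \<le> s" if "N \<in> \<N>" for N
    unfolding s_def using that bdd by (rule cSUP_upper)
  have "\<exists>N\<in>\<N>. s - 1 / Suc n < measure M N" for n :: nat
    unfolding s_def using \<N>(2) bdd by (intro less_cSUP_iff[THEN iffD1]) auto
  then obtain N where N: "\<And>n. N n \<in> \<N>" "\<And>n. s - 1 / Suc n < measure M (N n)"
    by metis
  define U where "U = (\<Union>n. N n)"
  have U: "U \<in> \<N>" "U \<in> sets M"
    unfolding U_def using Union_closed[OF N(1)] \<N>(1) by auto
  have U_large: "s - 1 / Suc n < measure M U" for n
    using N(2)[of n] finite_measure_mono[of "N n" U] U(2) unfolding U_def by fastforce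
  show ?thesis
  proof (intro bexI[OF _ U(1)] ballI)
    fix K assume K: "K \<in> \<N>"
    then have K_sets: "K \<in> sets M"
      using \<N>(1) by auto
    have "(\<Union>i::nat. if i = 0 then K else U) \<in> \<N>"
      using K U(1) by (intro Union_closed) auto
    moreover have "(\<Union>i::nat. if i = 0 then K else U) = U \<union> (K - U)"
      by (auto split: if_splits)
    moreover have "measure M (U \<union> (K - U)) = measure M U + measure M (K - U)"
      using K_sets U(2) by (intro finite_measure_Union) auto
    ultimately have "measure M U + measure M (K - U) \<le> s"
      using le_s by metis
    then have small: "measure M (K - U) < 1 / Suc n" for n
      using U_large[of n] by linarith
    have "measure M (K - U) = 0"
    proof (rule ccontr)
      assume "measure M (K - U) \<noteq> 0"
      then obtain n where "1 / Suc n < measure M (K - U)"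
        using measure_nonneg[of M "K - U"] by (metis nat_approx_posE order_neq_le_trans)
      with small[of n] show False
        by simp
    qed
    then show "K - U \<in> null_sets M"
      using K_sets U(2) by (auto simp: emeasure_eq_measure)
  qed
qed

lemma (in sigma_finite_measure) ex_finite_measure_dominating:
  "\<exists>\<nu>. sets \<nu> = sets M \<and> finite_measure \<nu> \<and> absolutely_continuous \<nu> M"
proof -
  obtain h where h: "h \<in> borel_measurable M" "integral\<^sup>N M h \<noteq> \<infinity>"
    "\<And>x. x \<in> space M \<Longrightarrow> 0 < h x"
    using Ex_finite_integrable_function by blast
  have "emeasure (density M h) (space M) = integral\<^sup>N M h"
    using h(1) by (subst emeasure_density) (auto intro!: nn_integral_cong)
  then have "finite_measure (density M h)"
    using h(2) by (intro finite_measureI) simp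
  moreover have "A \<in> null_sets M" if "A \<in> null_sets (density M h)" for A
  proof -
    have "A \<in> sets M" "AE x in M. x \<in> A \<longrightarrow> h x = 0"
      using that h(1) by (auto simp: null_sets_density_iff)
    moreover from this(2) have "AE x in M. x \<notin> A"
      using AE_space by eventually_elim (use h(3) in fastforce)
    ultimately show ?thesis
      by (simp add: AE_iff_null_sets)
  qed
  ultimately show ?thesis
    unfolding absolutely_continuous_def by (intro exI[of _ "density M h"]) auto
qed

text \<open>\<open>N \<ll> M\<close> on the subsets of \<open>K\<close>; arguments ordered as in \<^const>\<open>absolutely_continuous\<close>.\<close>

definition absolutely_continuous_on :: "'a set \<Rightarrow> 'a measure \<Rightarrow> 'a measure \<Rightarrow> bool" where
  "absolutely_continuous_on K M N \<longleftrightarrow> (\<forall>A\<in>sets N. A \<subseteq> K \<longrightarrow> A \<in> null_sets M \<longrightarrow> A \<in> null_sets N)"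

lemma absolutely_continuous_on_UN:
  assumes K: "\<And>i. K i \<in> sets M" "\<And>i. absolutely_continuous_on (K i) (P i) M"
    and P: "\<And>i. sets (P i) = sets M" "\<And>i. absolutely_continuous P0 (P i)"
  shows "absolutely_continuous_on (\<Union>i::nat. K i) P0 M"
  unfolding absolutely_continuous_on_def
proof (intro ballI impI)
  fix A assume A: "A \<in> sets M" "A \<subseteq> (\<Union>i. K i)" "A \<in> null_sets P0"
  have "A \<inter> K i \<in> null_sets M" for i
  proof -
    have "A \<in> null_sets (P i)"
      using P(2)[of i] A(3) unfolding absolutely_continuous_def by (rule subsetD)
    then have "A \<inter> K i \<in> null_sets (P i)"
      by (rule null_sets_subset) (use A(1) K(1) P(1) in auto)
    with K(2)[of i] show ?thesis
      using A(1) K(1) unfolding absolutely_continuous_on_def by simp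
  qed
  then have "(\<Union>i. A \<inter> K i) \<in> null_sets M"
    by (rule null_sets_UN)
  moreover have "(\<Union>i. A \<inter> K i) = A"
    using A(2) by blast
  ultimately show "A \<in> null_sets M"
    by simp
qed

lemma (in finite_measure) Halmos_Savage:
  assumes sets_eq: "\<And>P. P \<in> \<P> \<Longrightarrow> sets P = sets M"
    and dominated: "\<And>P. P \<in> \<P> \<Longrightarrow> absolutely_continuous M P"
    and countably_dominated: "\<And>Pn. (\<And>i::nat. Pn i \<in> \<P>) \<Longrightarrow> \<exists>P\<in>\<P>. \<forall>i. absolutely_continuous P (Pn i)"
    and "\<P> \<noteq> {}"
  shows "\<exists>P0\<in>\<P>. \<forall>P\<in>\<P>. absolutely_continuous P0 P"
proof -
  txt \<open>An essentially largest set on which some member of \<open>\<P>\<close> is equivalent to \<open>M\<close> carries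
    the dominating member.\<close>
  define \<K> where "\<K> = {K \<in> sets M. \<exists>P\<in>\<P>. absolutely_continuous_on K P M}"
  have "\<exists>K0\<in>\<K>. \<forall>K\<in>\<K>. K - K0 \<in> null_sets M"
  proof (rule ex_ess_greatest_set)
    show "\<K> \<subseteq> sets M"
      by (auto simp: \<K>_def)
    have "{} \<in> \<K>"
      using \<open>\<P> \<noteq> {}\<close> by (auto simp: \<K>_def absolutely_continuous_on_def)
    then show "\<K> \<noteq> {}"
      by blast
    show "(\<Union>i. K i) \<in> \<K>" if K: "\<And>i::nat. K i \<in> \<K>" for K
    proof -
      have "\<forall>i. \<exists>P\<in>\<P>. absolutely_continuous_on (K i) P M"
        using K unfolding \<K>_def by blast
      then obtain Pn where Pn: "\<And>i. Pn i \<in> \<P>" "\<And>i. absolutely_continuous_on (K i) (Pn i) M"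
        by metis
      obtain P0 where P0: "P0 \<in> \<P>" "\<And>i. absolutely_continuous P0 (Pn i)"
        using countably_dominated[of Pn] Pn(1) by blast
      have K_sets: "K i \<in> sets M" for i
        using K unfolding \<K>_def by blast
      have "absolutely_continuous_on (\<Union>i. K i) P0 M"
        using K_sets Pn(2) sets_eq[OF Pn(1)] P0(2) by (rule absolutely_continuous_on_UN)
      with K_sets P0(1) show ?thesis
        unfolding \<K>_def by blast
    qed
  qed
  then obtain K0 P0 where K0: "K0 \<in> sets M" "absolutely_continuous_on K0 P0 M"
      "\<And>K. K \<in> \<K> \<Longrightarrow> K - K0 \<in> null_sets M" and P0: "P0 \<in> \<P>"
    unfolding \<K>_def by blast
  have "null_sets P0 \<subseteq> null_sets P" if P: "P \<in> \<P>" for P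
  proof
    have P_null: "B \<in> null_sets P" if "B \<in> null_sets M" for B
      using dominated[OF P] that unfolding absolutely_continuous_def by blast
    obtain N where N: "N \<in> null_sets P" "\<And>A. A \<in> null_sets P \<Longrightarrow> A - N \<in> null_sets M"
      using ex_ess_greatest_set[of "null_sets P"] sets_eq[OF P] by blast
    have N_sets: "N \<in> sets M"
      using N(1) sets_eq[OF P] by auto
    have "absolutely_continuous_on (space M - N) P M"
      unfolding absolutely_continuous_on_def
    proof (intro ballI impI)
      fix A assume "A \<subseteq> space M - N" "A \<in> null_sets P"
      moreover from this have "A - N = A"
        by blast
      ultimately show "A \<in> null_sets M"
        using N(2) by metis
    qed
    then have gap: "space M - N - K0 \<in> null_sets P"
      using K0(3) N_sets P P_null unfolding \<K>_def by blast
    fix A assume A: "A \<in> null_sets P0"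
    have A_sets: "A \<in> sets M"
      using A sets_eq[OF P0] by auto
    have "A \<inter> K0 \<in> null_sets P0"
      by (rule null_sets_subset[OF A]) (use A_sets K0(1) sets_eq[OF P0] in auto)
    then have "A \<inter> K0 \<in> null_sets M"
      using K0(2) A_sets K0(1) unfolding absolutely_continuous_on_def by simp
    then have "(A \<inter> K0) \<union> (space M - N - K0) \<union> N \<in> null_sets P"
      using P_null gap N(1) by auto
    then show "A \<in> null_sets P"
      by (rule null_sets_subset) (use A_sets sets_eq[OF P] sets.sets_into_space in auto)
  qed
  with P0 show ?thesis
    unfolding absolutely_continuous_def by blast
qed

lemma sigma_convex_dominated_ex_dominating_member:
  assumes sets_eq: "\<And>P. P \<in> \<P> \<Longrightarrow> sets P = sets F" and sconvex: "sigma_convex F \<P>"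
    and \<mu>: "sets \<mu> = sets F" "sigma_finite_measure \<mu>" "dominated_by \<P> \<mu>"
    and "\<P> \<noteq> {}"
  shows "\<exists>P0\<in>\<P>. \<forall>P\<in>\<P>. absolutely_continuous P0 P"
proof -
  obtain \<nu> where \<nu>: "sets \<nu> = sets F" "finite_measure \<nu>" "absolutely_continuous \<nu> \<mu>"
    using sigma_finite_measure.ex_finite_measure_dominating[OF \<mu>(2)] \<mu>(1) by blast
  obtain l :: "nat \<Rightarrow> real" where l: "\<And>k. 0 < l k" "l sums 1"
    using ex_positive_weights_sums_1 by blast
  show ?thesis
  proof (rule finite_measure.Halmos_Savage[OF \<nu>(2)])
    show "sets P = sets \<nu>" if "P \<in> \<P>" for P
      using sets_eq[OF that] \<nu>(1) by simp
    show "absolutely_continuous \<nu> P" if "P \<in> \<P>" for P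
      using \<nu>(3) \<mu>(3) that unfolding dominated_by_def absolutely_continuous_def by blast
    show "\<exists>P\<in>\<P>. \<forall>i. absolutely_continuous P (Pn i)" if Pn: "\<And>i::nat. Pn i \<in> \<P>" for Pn
    proof (intro bexI allI)
      show "ccomb F l Pn \<in> \<P>"
        using sconvex Pn l unfolding sigma_convex_def sconv_def by (blast intro: less_imp_le)
      show "absolutely_continuous (ccomb F l Pn) (Pn i)" for i
        unfolding absolutely_continuous_def using sets_eq[OF Pn] l(1) by (blast intro: null_sets_ccombD)
    qed
  qed fact
qed

lemma lll_sconv_imp_dominated:
  assumes \<Q>: "countable \<Q>" "\<And>Q. Q \<in> \<Q> \<Longrightarrow> prob_space Q \<and> sets Q = sets F"
    and \<P>_\<Q>: "lll \<P> (sconv F \<Q>)"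
  shows "\<exists>\<mu>. sets \<mu> = sets F \<and> finite_measure \<mu> \<and> dominated_by \<P> \<mu>"
proof (cases "\<Q> = {}")
  case True
  then have "\<P> = {}"
    using \<P>_\<Q> by (simp add: lll_def sconv_def)
  moreover have "finite_measure (null_measure F)"
    by (rule finite_measureI) simp
  ultimately show ?thesis
    by (intro exI[of _ "null_measure F"]) (simp add: dominated_by_def)
next
  case False
  then obtain \<mu> where \<mu>: "sets \<mu> = sets F" "prob_space \<mu>" "dominated_by (sconv F \<Q>) \<mu>"
    using sconv_dominated_by_prob_space[OF \<Q>(1) _ \<Q>(2)] by blast
  moreover from \<P>_\<Q> \<mu>(3) have "dominated_by \<P> \<mu>"
    unfolding lll_def dominated_by_def absolutely_continuous_def by blast
  ultimately show ?thesis
    by (auto simp: prob_space_def)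
qed

theorem lemma3p2:
  fixes F :: "'a measure" and \<P> :: "'a measure set"
  assumes probs: "\<And>P. P \<in> \<P> \<Longrightarrow> prob_space P \<and> sets P = sets F"
    and sconvex: "sigma_convex F \<P>"
  shows "(\<exists>\<mu>. sets \<mu> = sets F \<and> sigma_finite_measure \<mu> \<and> dominated_by \<P> \<mu>) \<longleftrightarrow>
         (\<exists>\<Q>. countable \<Q> \<and> (\<forall>Q\<in>\<Q>. prob_space Q \<and> sets Q = sets F) \<and>
              (\<forall>Q1\<in>\<Q>. \<forall>Q2\<in>\<Q>. Q1 \<noteq> Q2 \<longrightarrow> mutually_singular Q1 Q2) \<and>
              lll \<Q> \<P> \<and> lll \<P> (sconv F \<Q>))"
proof
  assume "\<exists>\<mu>. sets \<mu> = sets F \<and> sigma_finite_measure \<mu> \<and> dominated_by \<P> \<mu>"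
  then obtain \<mu> where \<mu>: "sets \<mu> = sets F" "sigma_finite_measure \<mu>" "dominated_by \<P> \<mu>"
    by blast
  show "\<exists>\<Q>. countable \<Q> \<and> (\<forall>Q\<in>\<Q>. prob_space Q \<and> sets Q = sets F) \<and>
      (\<forall>Q1\<in>\<Q>. \<forall>Q2\<in>\<Q>. Q1 \<noteq> Q2 \<longrightarrow> mutually_singular Q1 Q2) \<and> lll \<Q> \<P> \<and> lll \<P> (sconv F \<Q>)"
  proof (cases "\<P> = {}")
    case True
    then show ?thesis
      by (intro exI[of _ "{}"]) (simp add: lll_def)
  next
    case False
    then obtain P0 where P0: "P0 \<in> \<P>" "\<And>P. P \<in> \<P> \<Longrightarrow> absolutely_continuous P0 P"
      using sigma_convex_dominated_ex_dominating_member[OF _ sconvex \<mu>] probs by blast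
    moreover have "P0 \<in> sconv F {P0}"
      using subset_sconv[of "{P0}" F] probs[OF P0(1)] by blast
    ultimately show ?thesis
      using probs by (intro exI[of _ "{P0}"]) (auto simp: lll_def absolutely_continuous_def)
  qed
next
  assume "\<exists>\<Q>. countable \<Q> \<and> (\<forall>Q\<in>\<Q>. prob_space Q \<and> sets Q = sets F) \<and>
      (\<forall>Q1\<in>\<Q>. \<forall>Q2\<in>\<Q>. Q1 \<noteq> Q2 \<longrightarrow> mutually_singular Q1 Q2) \<and> lll \<Q> \<P> \<and> lll \<P> (sconv F \<Q>)"
  then have "\<exists>\<mu>. sets \<mu> = sets F \<and> finite_measure \<mu> \<and> dominated_by \<P> \<mu>"
    by (auto intro: lll_sconv_imp_dominated)
  then show "\<exists>\<mu>. sets \<mu> = sets F \<and> sigma_finite_measure \<mu> \<and> dominated_by \<P> \<mu>"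
    by (auto simp: finite_measure_def)
qed

end
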